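(* Let $f$ be a probability density on $\mathbb{R}$ and let $\mathcal{C}$ be the class of log-concave probability densities on $\mathbb{R}$. Define $$\pi_0:=\sup\big\{\pi:\exists g\in\mathcal{C}\text{ such that } f-\pi g\ge0\text{ a.e.}\big\}.$$ Then $\pi_0$ equals the value of the optimization problem $$\text{maximize } \int_{-\infty}^{\infty}h(x)\,dx\quad\text{over}\quad\{h:\mathbb{R}\to\mathbb{R}_+ \text{ log-concave},\ h\le f \text{ a.e.}\},$$ and this problem admits a maximizer. Furthermore, the maximizer need not be unique: there exist densities $f$ (e.g. $f=\frac1m(f_1+\cdots+f_m)$ with $m\ge2$ and $f_1,\dots,f_m$ log-concave densities with pairwise disjoint supports) for which the problem has more than one maximizer.
   Context: A function $h:\mathbb{R}\to[0,\infty)$ is log-concave if $\log h:\mathbb{R}\to[-\infty,\infty)$ is concave (with $\log 0=-\infty$); in particular $h\equiv0$ is log-concave. Functions are identified when they agree almost everywhere. *)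

theory Defs
  imports "HOL-Analysis.Analysis"
begin

definition lnE :: "real \<Rightarrow> ereal" where
  "lnE a = (if a = 0 then -\<infinity> else ereal (ln a))"

definition log_concave :: "(real \<Rightarrow> real) \<Rightarrow> bool" where
  "log_concave h \<longleftrightarrow> (\<forall>x. 0 \<le> h x) \<and>
     (\<forall>x y t. 0 < t \<and> t < 1 \<longrightarrow>
        ereal t * lnE (h x) + ereal (1 - t) * lnE (h y) \<le> lnE (h (t * x + (1 - t) * y)))"

definition prob_density :: "(real \<Rightarrow> real) \<Rightarrow> bool" where
  "prob_density f \<longleftrightarrow> f \<in> borel_measurable lborel \<and> (\<forall>x. 0 \<le> f x) \<and>
     integrable lborel f \<and> (\<integral>x. f x \<partial>lborel) = 1"

definition logconcave_densities :: "(real \<Rightarrow> real) set" where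
  "logconcave_densities = {g. prob_density g \<and> log_concave g}"

definition pi0 :: "(real \<Rightarrow> real) \<Rightarrow> real" where
  "pi0 f = Sup {p. \<exists>g\<in>logconcave_densities. AE x in lborel. f x - p * g x \<ge> 0}"

definition feasible :: "(real \<Rightarrow> real) \<Rightarrow> (real \<Rightarrow> real) \<Rightarrow> bool" where
  "feasible f h \<longleftrightarrow> log_concave h \<and> (AE x in lborel. h x \<le> f x)"

definition opt_value :: "(real \<Rightarrow> real) \<Rightarrow> real" where
  "opt_value f = Sup {(\<integral>x. h x \<partial>lborel) | h. feasible f h}"

definition is_maximizer :: "(real \<Rightarrow> real) \<Rightarrow> (real \<Rightarrow> real) \<Rightarrow> bool" where
  "is_maximizer f h \<longleftrightarrow> feasible f h \<and>
     (\<forall>h'. feasible f h' \<longrightarrow> (\<integral>x. h' x \<partial>lborel) \<le> (\<integral>x. h x \<partial>lborel))"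

end

theory Submission
  imports Defs "HOL-Probability.Helly_Selection"
begin

(* A log-concave h <= f with integral p > 0 is the same thing as p * g with g a log-concave
   density and f - p * g >= 0, so pi0 is the value of the optimization problem.

   A maximizer is obtained by compactness. For a maximizing sequence h_n the functions
   h_n / (1 + h_n) are quasi-concave with values in [0, 1], hence minima of a bounded increasing
   and a bounded decreasing function, and Helly's selection theorem yields a subsequence
   converging pointwise in [0, \<infinity>]. Domination by f gives the integral of the limit by
   dominated convergence. The limit is finite everywhere: by log-concavity an infinite value at
   one point spreads to the open segment towards any point where the limit is positive, and
   such a segment is not a null set.

   For the mixture of the uniform densities on [0, 1] and [2, 3], a log-concave h <= f vanishes
   on one of the two blocks, since otherwise it would be positive on the gap (1, 2); hence both
   halves of the density are maximizers. *)

section \<open>Log-concave functions\<close>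

lemma lnE_weighted_le_iff:
  fixes a b c t :: real
  assumes "0 \<le> a" "0 \<le> b" "0 \<le> c" "0 < t" "t < 1"
  shows "ereal t * lnE a + ereal (1 - t) * lnE b \<le> lnE c \<longleftrightarrow> a powr t * b powr (1 - t) \<le> c"
proof (cases "a = 0 \<or> b = 0")
  case True
  then show ?thesis using assms by (auto simp: lnE_def)
next
  case False
  then have "0 < a" "0 < b" using assms by auto
  moreover have "a powr t * b powr (1 - t) = exp (t * ln a + (1 - t) * ln b)"
    using \<open>0 < a\<close> \<open>0 < b\<close> by (simp add: powr_def exp_add mult.commute)
  ultimately show ?thesis
    using assms by (cases "c = 0") (auto simp: lnE_def ln_ge_iff)
qed

lemma log_concave_iff_powr:
  "log_concave h \<longleftrightarrow> (\<forall>x. 0 \<le> h x) \<and>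
     (\<forall>x y t. 0 < t \<and> t < 1 \<longrightarrow> h x powr t * h y powr (1 - t) \<le> h (t * x + (1 - t) * y))"
  unfolding log_concave_def using lnE_weighted_le_iff by auto

lemma log_concave_nonneg: "log_concave h \<Longrightarrow> 0 \<le> h x"
  unfolding log_concave_def by blast

lemma log_concaveD:
  assumes "log_concave h" "0 < t" "t < 1"
  shows "h x powr t * h y powr (1 - t) \<le> h (t * x + (1 - t) * y)"
  using assms log_concave_iff_powr by blast

lemma min_le_powr_weighted:
  fixes a b t :: real
  assumes "0 \<le> a" "0 \<le> b" "0 < t" "t < 1"
  shows "min a b \<le> a powr t * b powr (1 - t)"
proof -
  have "min a b = min a b powr t * min a b powr (1 - t)"
    using assms by (cases "min a b = 0") (simp_all add: powr_add [symmetric])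
  also have "\<dots> \<le> a powr t * b powr (1 - t)"
    using assms by (intro mult_mono powr_mono2) auto
  finally show ?thesis .
qed

lemma log_concave_quasiconcave:
  assumes h: "log_concave h" and "x \<le> z" "z \<le> y"
  shows "min (h x) (h y) \<le> h z"
proof (cases "x < z \<and> z < y")
  case True
  define t where "t = (y - z) / (y - x)"
  have t: "0 < t" "t < 1"
    using True by (auto simp: t_def field_simps)
  have "t * (y - x) = y - z"
    using True by (simp add: t_def)
  then have z: "z = t * x + (1 - t) * y"
    by (simp add: algebra_simps)
  have "min (h x) (h y) \<le> h x powr t * h y powr (1 - t)"
    using t log_concave_nonneg[OF h] by (intro min_le_powr_weighted) auto
  also have "\<dots> \<le> h z"
    using log_concaveD[OF h t] z by simp
  finally show ?thesis .
next
  case False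
  with assms show ?thesis by (cases "z = x") auto
qed

lemma log_concave_borel_measurable:
  assumes "log_concave h"
  shows "h \<in> borel_measurable lborel"
  unfolding borel_measurable_iff_greater
proof
  fix a :: real
  have "is_interval {x. a < h x}"
    unfolding is_interval_1 using log_concave_quasiconcave[OF assms] by (fastforce dest: less_le_trans)
  then show "{x \<in> space lborel. a < h x} \<in> sets lborel"
    using real_interval_borel_measurable by simp
qed

lemma log_concave_cmult:
  assumes h: "log_concave h" and c: "0 \<le> c"
  shows "log_concave (\<lambda>x. c * h x)"
  unfolding log_concave_iff_powr
proof (intro conjI allI impI)
  show "0 \<le> c * h x" for x
    using c log_concave_nonneg[OF h] by simp
  fix x y t :: real
  assume t: "0 < t \<and> t < 1"
  have "(c * h x) powr t * (c * h y) powr (1 - t)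
      = (c powr t * c powr (1 - t)) * (h x powr t * h y powr (1 - t))"
    using c log_concave_nonneg[OF h] by (simp add: powr_mult)
  also have "c powr t * c powr (1 - t) = c"
    using c by (cases "c = 0") (simp_all add: powr_add [symmetric])
  finally show "(c * h x) powr t * (c * h y) powr (1 - t) \<le> c * h (t * x + (1 - t) * y)"
    using log_concaveD[OF h, of t] t c by (simp add: mult_left_mono)
qed

lemma log_concave_indicator:
  assumes "convex S" "0 \<le> c"
  shows "log_concave (\<lambda>x. c * indicator S x)"
  unfolding log_concave_iff_powr
proof (intro conjI allI impI)
  fix x y t :: real
  assume t: "0 < t \<and> t < 1"
  show "(c * indicator S x) powr t * (c * indicator S y) powr (1 - t) \<le> c * indicator S (t * x + (1 - t) * y)"
  proof (cases "x \<in> S \<and> y \<in> S")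
    case True
    then have "t * x + (1 - t) * y \<in> S"
      using convexD[OF \<open>convex S\<close>, of x y t "1 - t"] t by simp
    then show ?thesis
      using True t \<open>0 \<le> c\<close> by (cases "c = 0") (simp_all add: powr_add [symmetric])
  qed (use \<open>0 \<le> c\<close> in auto)
qed (use assms in auto)

lemma log_concave_limit:
  assumes h: "\<And>n. log_concave (h n)" and lim: "\<And>x. (\<lambda>n. h n x) \<longlonglongrightarrow> H x"
  shows "log_concave H"
  unfolding log_concave_iff_powr
proof (intro conjI allI impI)
  show "0 \<le> H x" for x
    using lim[of x] log_concave_nonneg[OF h] by (auto intro: LIMSEQ_le_const)
  fix x y t :: real
  assume t: "0 < t \<and> t < 1"
  have "(\<lambda>n. h n x powr t * h n y powr (1 - t)) \<longlonglongrightarrow> H x powr t * H y powr (1 - t)"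
    using t log_concave_nonneg[OF h] by (intro tendsto_mult tendsto_powr' lim tendsto_const) auto
  then show "H x powr t * H y powr (1 - t) \<le> H (t * x + (1 - t) * y)"
    using log_concaveD[OF h] t by (intro LIMSEQ_le[OF _ lim]) auto
qed

section \<open>The two optimization problems\<close>

lemma feasible_integral_le_one:
  assumes "prob_density f" "feasible f h"
  shows "(\<integral>x. h x \<partial>lborel) \<le> 1"
  using assms integral_mono_AE'[of lborel f h] by (simp add: prob_density_def feasible_def)

lemma feasible_zero: "prob_density f \<Longrightarrow> feasible f (\<lambda>x. 0)"
  using log_concave_indicator[of "{}" 0] by (simp add: feasible_def prob_density_def)

lemma bdd_above_feasible_integrals:
  "prob_density f \<Longrightarrow> bdd_above {(\<integral>x. h x \<partial>lborel) | h. feasible f h}"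
  using feasible_integral_le_one by (auto intro!: bdd_aboveI[of _ 1])

lemma feasible_integral_le_opt_value:
  assumes "prob_density f" "feasible f h"
  shows "(\<integral>x. h x \<partial>lborel) \<le> opt_value f"
  unfolding opt_value_def using assms by (intro cSup_upper bdd_above_feasible_integrals) auto

lemma integral_cmult_indicator_Icc:
  fixes a b c :: real
  assumes "a \<le> b"
  shows "integrable lborel (\<lambda>x. c * indicator {a..b} x)"
    and "(\<integral>x. c * indicator {a..b} x \<partial>lborel) = c * (b - a)"
  using assms by auto

lemma indicator_unit_interval_log_concave_density:
  "(\<lambda>x. indicator {0..1::real} x) \<in> logconcave_densities"
  using log_concave_indicator[of "{0..1::real}" 1] integral_cmult_indicator_Icc[of 0 1 1]
  by (simp add: logconcave_densities_def prob_density_def)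

lemma cSup_eq_of_same_positive_elements:
  fixes A B :: "real set"
  assumes "0 \<in> A" "0 \<in> B" "bdd_above A" "bdd_above B"
    and "\<And>x. 0 < x \<Longrightarrow> x \<in> A \<longleftrightarrow> x \<in> B"
  shows "Sup A = Sup B"
proof -
  have le: "Sup X \<le> Sup Y"
    if "0 \<in> X" "0 \<in> Y" "bdd_above Y" "\<And>x. 0 < x \<Longrightarrow> x \<in> X \<Longrightarrow> x \<in> Y"
    for X Y :: "real set"
  proof (rule cSup_least)
    show "X \<noteq> {}" using that by blast
    fix x assume "x \<in> X"
    show "x \<le> Sup Y"
    proof (cases "0 < x")
      case True
      then show ?thesis using that \<open>x \<in> X\<close> by (intro cSup_upper) auto
    next
      case False
      then show ?thesis using that cSup_upper[of 0 Y] by linarith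
    qed
  qed
  show ?thesis using le[of A B] le[of B A] assms by (simp add: antisym)
qed

lemma pi0_eq_opt_value:
  assumes f: "prob_density f"
  shows "pi0 f = opt_value f"
proof -
  let ?P = "{p. \<exists>g\<in>logconcave_densities. AE x in lborel. f x - p * g x \<ge> 0}"
  let ?Q = "{(\<integral>x. h x \<partial>lborel) | h. feasible f h}"
  have Q_iff_P: "p \<in> ?Q \<longleftrightarrow> p \<in> ?P" if "0 < p" for p
  proof
    assume "p \<in> ?Q"
    then obtain h where h: "feasible f h" and p: "p = (\<integral>x. h x \<partial>lborel)"
      by blast
    then have "integrable lborel h"
      using \<open>0 < p\<close> not_integrable_integral_eq by fastforce
    moreover have "log_concave (\<lambda>x. h x / p)"
      using log_concave_cmult[of h "1 / p"] h \<open>0 < p\<close> by (simp add: feasible_def)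
    ultimately have "(\<lambda>x. h x / p) \<in> logconcave_densities"
      using \<open>0 < p\<close> log_concave_nonneg[of "\<lambda>x. h x / p"]
      by (simp add: logconcave_densities_def prob_density_def flip: p)
    moreover have "AE x in lborel. f x - p * (h x / p) \<ge> 0"
      using h \<open>0 < p\<close> by (auto simp: feasible_def)
    ultimately show "p \<in> ?P" by (intro CollectI bexI[of _ "\<lambda>x. h x / p"])
  next
    assume "p \<in> ?P"
    then obtain g where g: "g \<in> logconcave_densities" and le: "AE x in lborel. f x - p * g x \<ge> 0"
      by blast
    then have "feasible f (\<lambda>x. p * g x)"
      using log_concave_cmult[of g p] \<open>0 < p\<close> by (auto simp: feasible_def logconcave_densities_def)
    moreover have "(\<integral>x. p * g x \<partial>lborel) = p"
      using g by (simp add: logconcave_densities_def prob_density_def)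
    ultimately show "p \<in> ?Q" by (intro CollectI exI[of _ "\<lambda>x. p * g x"]) simp
  qed
  have "0 \<in> ?P"
    using f indicator_unit_interval_log_concave_density by (auto simp: prob_density_def)
  moreover have "0 \<in> ?Q"
    using feasible_zero[OF f] by force
  moreover have "bdd_above ?P"
  proof -
    have "?P \<subseteq> {..0} \<union> ?Q"
      using Q_iff_P by (meson UnI1 UnI2 atMost_iff not_less subsetI)
    then show ?thesis
      using bdd_above_feasible_integrals[OF f] by (meson bdd_above_Un bdd_above_mono bdd_above_Iic)
  qed
  ultimately show ?thesis
    unfolding pi0_def opt_value_def
    using bdd_above_feasible_integrals[OF f]
    by (rule cSup_eq_of_same_positive_elements) (use Q_iff_P in blast)
qed

section \<open>Non-uniqueness of the maximizer\<close>

lemma not_AE_notin_Ioo: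
  fixes a b :: real
  assumes "a < b"
  shows "\<not> (AE x in lborel. x \<notin> {a<..<b})"
proof
  assume "AE x in lborel. x \<notin> {a<..<b}"
  then have "emeasure lborel {a<..<b} = 0"
    by (subst (asm) AE_iff_measurable[of "{a<..<b}"]) auto
  with assms show False by simp
qed

lemma log_concave_below_vanishes_on_one_side:
  assumes h: "log_concave h" and le: "AE x in lborel. h x \<le> f x"
    and "a < b" and gap: "\<And>z. a < z \<Longrightarrow> z < b \<Longrightarrow> f z \<le> 0"
  shows "(\<forall>x\<le>a. h x = 0) \<or> (\<forall>y\<ge>b. h y = 0)"
proof (rule ccontr)
  assume "\<not> ?thesis"
  then obtain x y where "x \<le> a" "h x \<noteq> 0" "b \<le> y" "h y \<noteq> 0"
    by blast
  moreover from this have "0 < h x" "0 < h y"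
    using log_concave_nonneg[OF h] by (simp_all add: less_le)
  have "AE z in lborel. z \<notin> {a<..<b}"
    using le
  proof eventually_elim
    case (elim z)
    show ?case
    proof
      assume z: "z \<in> {a<..<b}"
      then have "min (h x) (h y) \<le> h z"
        using \<open>x \<le> a\<close> \<open>b \<le> y\<close> by (intro log_concave_quasiconcave[OF h]) auto
      with elim z gap[of z] \<open>0 < h x\<close> \<open>0 < h y\<close> show False
        by simp
    qed
  qed
  with not_AE_notin_Ioo[OF \<open>a < b\<close>] show False ..
qed

definition two_blocks_density :: "real \<Rightarrow> real" where
  "two_blocks_density x = (1/2) * indicator {0..1} x + (1/2) * indicator {2..3} x"

lemma prob_density_two_blocks: "prob_density two_blocks_density"
proof -
  note blocks = integral_cmult_indicator_Icc[of 0 1 "1/2"] integral_cmult_indicator_Icc[of 2 3 "1/2"]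
  have "integrable lborel two_blocks_density"
    unfolding two_blocks_density_def[abs_def] using blocks by simp
  then show ?thesis
    using blocks borel_measurable_integrable
    by (simp add: prob_density_def two_blocks_density_def)
qed

lemma feasible_two_blocks_integral_le:
  assumes "feasible two_blocks_density h"
  shows "(\<integral>x. h x \<partial>lborel) \<le> 1/2"
proof -
  have h: "log_concave h" and le: "AE x in lborel. h x \<le> two_blocks_density x"
    using assms by (auto simp: feasible_def)
  have block: "(\<integral>x. h x \<partial>lborel) \<le> 1/2"
    if "AE x in lborel. h x \<le> (1/2) * indicator {c..c+1} x" for c :: real
    using that integral_cmult_indicator_Icc[of c "c+1" "1/2"]
      integral_mono_AE'[of lborel "\<lambda>x. (1/2) * indicator {c..c+1} x" h] by simp
  have "(\<forall>x\<le>1. h x = 0) \<or> (\<forall>y\<ge>2. h y = 0)"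
    using log_concave_below_vanishes_on_one_side[OF h le, of 1 2]
    by (simp add: two_blocks_density_def)
  then show ?thesis
  proof
    assume h0: "\<forall>x\<le>1. h x = 0"
    from le have "AE x in lborel. h x \<le> (1/2) * indicator {2..3} x"
    proof eventually_elim
      case (elim x)
      then show ?case
        using h0 by (cases "x \<le> 1") (auto simp: two_blocks_density_def indicator_def)
    qed
    then show ?thesis
      using block[of 2] by simp
  next
    assume h0: "\<forall>y\<ge>2. h y = 0"
    from le have "AE x in lborel. h x \<le> (1/2) * indicator {0..1} x"
    proof eventually_elim
      case (elim x)
      then show ?case
        using h0 by (cases "2 \<le> x") (auto simp: two_blocks_density_def indicator_def)
    qed
    then show ?thesis
      using block[of 0] by simp
  qed
qed

lemma two_blocks_maximizers_not_unique:
  "\<exists>h1 h2. is_maximizer two_blocks_density h1 \<and> is_maximizer two_blocks_density h2 \<and>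
     \<not> (AE x in lborel. h1 x = h2 x)"
proof (intro exI conjI)
  have block: "is_maximizer two_blocks_density (\<lambda>x. (1/2) * indicator {c..c+1} x)"
    if "c = 0 \<or> c = 2" for c :: real
  proof -
    have "feasible two_blocks_density (\<lambda>x. (1/2) * indicator {c..c+1} x)"
      using that log_concave_indicator[of "{c..c+1}" "1/2"]
      by (auto simp: feasible_def two_blocks_density_def indicator_def)
    then show ?thesis
      using integral_cmult_indicator_Icc[of c "c+1" "1/2"] feasible_two_blocks_integral_le
      by (simp add: is_maximizer_def)
  qed
  show "is_maximizer two_blocks_density (\<lambda>x. (1/2) * indicator {0..1} x)"
    using block[of 0] by simp
  show "is_maximizer two_blocks_density (\<lambda>x. (1/2) * indicator {2..3} x)"
    using block[of 2] by simp
  have "AE x in lborel. x \<notin> {0<..<1::real}"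
    if "AE x in lborel. (1/2) * indicator {0..1} x = (1/2::real) * indicator {2..3::real} x"
    using that by eventually_elim (auto simp: indicator_def)
  then show "\<not> (AE x in lborel. (1/2) * indicator {0..1} x = (1/2::real) * indicator {2..3::real} x)"
    using not_AE_notin_Ioo[OF zero_less_one] by blast
qed

section \<open>Pointwise compactness of log-concave sequences\<close>

lemma convergent_subseq_on_countable:
  fixes f :: "nat \<Rightarrow> 'a \<Rightarrow> real"
  assumes "countable S" and bdd: "\<And>n x. x \<in> S \<Longrightarrow> \<bar>f n x\<bar> \<le> M"
  shows "\<exists>s. strict_mono s \<and> (\<forall>x\<in>S. convergent (\<lambda>n. f (s n) x))"
proof (cases "S = {}")
  case True
  then show ?thesis using strict_mono_id by blast
next
  case False
  define r where "r = from_nat_into S"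
  have S: "S = range r"
    using False \<open>countable S\<close> by (simp add: r_def)
  have "compact (PiE UNIV (\<lambda>_::nat. {-M..M}))"
    using compactin_PiE[of "\<lambda>_. euclidean" UNIV "\<lambda>_::nat. {-M..M}"]
    by (simp add: euclidean_product_topology)
  moreover have "\<forall>n. (\<lambda>i. f n (r i)) \<in> PiE UNIV (\<lambda>_. {-M..M})"
    using bdd S by (auto simp: abs_le_iff minus_le_iff)
  ultimately obtain l s where s: "strict_mono s" and lim: "((\<lambda>n i. f n (r i)) \<circ> s) \<longlonglongrightarrow> l"
    using seq_compactE[OF compact_imp_seq_compact] by metis
  have "(\<lambda>n. f (s n) (r i)) \<longlonglongrightarrow> l i" for i
    using continuous_on_tendsto_compose[OF continuous_on_product_coordinates lim] by (simp add: comp_def)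
  then show ?thesis
    using s S by (auto simp: convergent_def)
qed

lemma mono_right_limit:
  fixes f :: "real \<Rightarrow> real"
  assumes mono: "mono f" and bdd: "\<And>x. \<bar>f x\<bar> \<le> M"
  defines "g \<equiv> \<lambda>x. Inf (f ` {x<..})"
  shows "mono g" and "\<bar>g x\<bar> \<le> M" and "continuous (at_right x) g"
    and "f x \<le> g x" and "x < y \<Longrightarrow> g x \<le> f y"
proof -
  have bdd_below: "bdd_below (f ` {x<..})" for x
    using bdd by (auto intro!: bdd_belowI[of _ "-M"] simp: abs_le_iff minus_le_iff)
  have f_le_g: "f x \<le> g x" for x
    unfolding g_def by (rule cInf_greatest) (auto intro: monoD[OF mono])
  have g_le_f: "g x \<le> f y" if "x < y" for x y
    unfolding g_def using that bdd_below by (intro cInf_lower) auto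
  show "mono g"
    unfolding g_def by (intro monoI cInf_superset_mono bdd_below) auto
  show "\<bar>g x\<bar> \<le> M"
    using f_le_g[of x] g_le_f[of x "x + 1"] bdd[of x] bdd[of "x + 1"] by (simp add: abs_le_iff)
  show "continuous (at_right x) g"
    unfolding continuous_within
  proof (rule order_tendstoI)
    fix a assume a: "a < g x"
    have "\<forall>\<^sub>F y in at_right x. x < y"
      by (rule eventually_at_right_less)
    then show "\<forall>\<^sub>F y in at_right x. a < g y"
      by eventually_elim (use a \<open>mono g\<close> in \<open>meson less_imp_le less_le_trans monoD\<close>)
  next
    fix a assume "g x < a"
    then obtain z where "x < z" "f z < a"
      unfolding g_def using bdd_below by (auto simp: cInf_less_iff)
    then show "\<forall>\<^sub>F y in at_right x. g y < a"
      unfolding eventually_at_right[OF \<open>x < z\<close>] using g_le_f le_less_trans by blast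
  qed
  show "f x \<le> g x" by (fact f_le_g)
  show "x < y \<Longrightarrow> g x \<le> f y" by (fact g_le_f)
qed

lemma mono_convergent_subseq:
  fixes f :: "nat \<Rightarrow> real \<Rightarrow> real"
  assumes mono: "\<And>n. mono (f n)" and bdd: "\<And>n x. \<bar>f n x\<bar> \<le> M"
  shows "\<exists>s. strict_mono s \<and> (\<forall>x. convergent (\<lambda>n. f (s n) x))"
proof -
  (* Helly_selection needs right-continuity, so it is applied to the right limits g n. As
     g n z <= f n x <= g n x for z < x, the f (s n) converge wherever the limit F is continuous;
     the countably many discontinuities of F are handled by a further subsequence. *)
  define g where "g n = (\<lambda>x. Inf (f n ` {x<..}))" for n
  have f_le_g: "f n x \<le> g n x" and g_le_f: "x < y \<Longrightarrow> g n x \<le> f n y" for n x y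
    using mono_right_limit(4,5)[OF mono bdd] by (simp_all add: g_def)
  obtain s F where s: "strict_mono s" and "mono F"
    and lim_g: "\<And>x. isCont F x \<Longrightarrow> (\<lambda>n. g (s n) x) \<longlonglongrightarrow> F x"
    using Helly_selection[of g M] mono_right_limit(1-3)[OF mono bdd] unfolding g_def by blast
  have countable_discont: "countable {x. \<not> isCont F x}"
    using mono_ctble_discont[OF \<open>mono F\<close>] by simp
  have lim_f: "(\<lambda>n. f (s n) x) \<longlonglongrightarrow> F x" if "isCont F x" for x
  proof (rule order_tendstoI)
    fix b assume "F x < b"
    with lim_g[OF that] show "\<forall>\<^sub>F n in sequentially. f (s n) x < b"
      by (rule order_tendstoD(2)[THEN eventually_mono]) (use f_le_g le_less_trans in blast)
  next
    fix a assume "a < F x"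
    with that have "\<forall>\<^sub>F z in at x. a < F z"
      by (simp add: isCont_def order_tendstoD(1))
    then obtain d where "0 < d" and d: "\<And>z. z \<noteq> x \<Longrightarrow> dist z x < d \<Longrightarrow> a < F z"
      unfolding eventually_at by blast
    have "\<not> {x - d<..<x} \<subseteq> {x. \<not> isCont F x}"
      using countable_subset[OF _ countable_discont] uncountable_open_interval[of "x - d" x] \<open>0 < d\<close>
      by auto
    then obtain z where z: "x - d < z" "z < x" "isCont F z"
      by auto
    then have "a < F z"
      by (intro d) (auto simp: dist_real_def)
    with lim_g[OF \<open>isCont F z\<close>] show "\<forall>\<^sub>F n in sequentially. a < f (s n) x"
      by (rule order_tendstoD(1)[THEN eventually_mono]) (use g_le_f[OF \<open>z < x\<close>] less_le_trans in blast)
  qed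
  obtain e where e: "strict_mono e"
    and lim_discont: "\<forall>x\<in>{x. \<not> isCont F x}. convergent (\<lambda>n. f (s (e n)) x)"
    using convergent_subseq_on_countable[OF countable_discont, of "\<lambda>n. f (s n)" M] bdd by blast
  have "convergent (\<lambda>n. f (s (e n)) x)" for x
  proof (cases "isCont F x")
    case True
    then show ?thesis
      using LIMSEQ_subseq_LIMSEQ[OF lim_f e] by (auto simp: convergent_def comp_def)
  qed (use lim_discont in auto)
  then show ?thesis
    using strict_mono_o[OF s e] by (auto simp: comp_def)
qed

lemma quasiconcave_eq_min_Sup:
  fixes g :: "real \<Rightarrow> real"
  assumes "bdd_above (range g)"
    and qc: "\<And>x y z. x \<le> z \<Longrightarrow> z \<le> y \<Longrightarrow> min (g x) (g y) \<le> g z"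
  shows "g x = min (Sup (g ` {..x})) (Sup (g ` {x..}))"
proof -
  have bdd: "bdd_above (g ` A)" for A
    using assms(1) by (meson bdd_above_mono image_mono subset_UNIV)
  have "g x \<le> Sup (g ` {..x})" "g x \<le> Sup (g ` {x..})"
    using bdd by (auto intro: cSup_upper)
  moreover have False if "g x < Sup (g ` {..x})" "g x < Sup (g ` {x..})"
  proof -
    have "\<exists>y\<in>{..x}. g x < g y" "\<exists>z\<in>{x..}. g x < g z"
      using that by (simp_all add: less_cSup_iff[OF _ bdd])
    with qc show False
      by (metis atLeast_iff atMost_iff min_less_iff_conj not_le)
  qed
  ultimately show ?thesis
    by (smt (verit))
qed

lemma quasiconcave_convergent_subseq:
  fixes g :: "nat \<Rightarrow> real \<Rightarrow> real"
  assumes bdd: "\<And>n x. \<bar>g n x\<bar> \<le> M"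
    and qc: "\<And>n x y z. x \<le> z \<Longrightarrow> z \<le> y \<Longrightarrow> min (g n x) (g n y) \<le> g n z"
  shows "\<exists>s. strict_mono s \<and> (\<forall>x. convergent (\<lambda>n. g (s n) x))"
proof -
  define I where "I n x = Sup (g n ` {..x})" for n x
  define D where "D n x = Sup (g n ` {x..})" for n x
  have bdd_img: "bdd_above (g n ` A)" for n A
    using bdd by (auto intro!: bdd_aboveI[of _ M] simp: abs_le_iff)
  have Sup_bdd: "\<bar>Sup (g n ` A)\<bar> \<le> M" if "x \<in> A" for n x A
  proof -
    have "g n x \<le> Sup (g n ` A)"
      using that bdd_img by (intro cSup_upper) auto
    moreover have "Sup (g n ` A) \<le> M"
      using that bdd by (intro cSup_least) (auto simp: abs_le_iff)
    ultimately show ?thesis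
      using bdd[of n x] by (simp add: abs_le_iff)
  qed
  have g_eq: "g n x = min (I n x) (D n x)" for n x
    unfolding I_def D_def using bdd_img qc by (intro quasiconcave_eq_min_Sup) auto
  have "mono (I n)" for n
    unfolding I_def by (intro monoI cSup_subset_mono bdd_img) auto
  moreover have "\<bar>I n x\<bar> \<le> M" for n x
    unfolding I_def by (rule Sup_bdd[of x]) simp
  ultimately obtain s where s: "strict_mono s" and conv_I: "\<And>x. convergent (\<lambda>n. I (s n) x)"
    using mono_convergent_subseq[of I M] by blast
  have "mono (\<lambda>x. - D (s n) x)" for n
    unfolding D_def by (intro monoI le_imp_neg_le cSup_subset_mono bdd_img) auto
  moreover have "\<bar>- D (s n) x\<bar> \<le> M" for n x
    unfolding D_def abs_minus_cancel by (rule Sup_bdd[of x]) simp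
  ultimately obtain e where e: "strict_mono e" and conv_D: "\<And>x. convergent (\<lambda>n. - D (s (e n)) x)"
    using mono_convergent_subseq[of "\<lambda>n x. - D (s n) x" M] by blast
  have "convergent (\<lambda>n. g (s (e n)) x)" for x
  proof -
    obtain LI LD where "(\<lambda>n. I (s n) x) \<longlonglongrightarrow> LI" "(\<lambda>n. - D (s (e n)) x) \<longlonglongrightarrow> LD"
      using conv_I[of x] conv_D[of x] unfolding convergent_def by blast
    then have "(\<lambda>n. min (I (s (e n)) x) (- (- D (s (e n)) x))) \<longlonglongrightarrow> min LI (- LD)"
      using LIMSEQ_subseq_LIMSEQ[OF _ e] by (intro tendsto_intros) (auto simp: comp_def)
    then show ?thesis
      by (auto simp: g_eq convergent_def)
  qed
  then show ?thesis
    using strict_mono_o[OF s e] by (auto simp: comp_def)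
qed

lemma frac_one_plus_less_iff:
  fixes u v :: real
  assumes "0 \<le> u" "0 \<le> v"
  shows "u / (1 + u) < v / (1 + v) \<longleftrightarrow> u < v"
  using assms by (simp add: divide_simps) (simp add: algebra_simps)

lemma log_concave_ereal_convergent_subseq:
  fixes h :: "nat \<Rightarrow> real \<Rightarrow> real"
  assumes h: "\<And>n. log_concave (h n)"
  shows "\<exists>s K. strict_mono s \<and> (\<forall>x. (\<lambda>n. ereal (h (s n) x)) \<longlonglongrightarrow> K x)"
proof -
  (* u / (1 + u) maps [0, \<infinity>) increasingly onto [0, 1): quasi-concavity survives, and a limit
     value 1 corresponds to the value \<infinity> of K. *)
  define a where "a n x = h n x / (1 + h n x)" for n x
  have nonneg: "0 \<le> h n x" for n x
    using log_concave_nonneg[OF h] .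
  have a_bdd: "\<bar>a n x\<bar> \<le> 1" for n x
    using nonneg[of n x] by (simp add: a_def divide_simps)
  have a_qc: "min (a n x) (a n y) \<le> a n z" if "x \<le> z" "z \<le> y" for n x y z
    using log_concave_quasiconcave[OF h that] nonneg frac_one_plus_less_iff
    unfolding a_def by (smt (verit))
  obtain s where s: "strict_mono s" and "\<And>x. convergent (\<lambda>n. a (s n) x)"
    using quasiconcave_convergent_subseq[of a 1] a_bdd a_qc by blast
  then obtain A where A: "\<And>x. (\<lambda>n. a (s n) x) \<longlonglongrightarrow> A x"
    unfolding convergent_def by metis
  have "A x \<le> 1" for x
    using A[of x] a_bdd by (intro LIMSEQ_le_const2[OF A]) (auto simp: abs_le_iff)
  have "(\<lambda>n. ereal (h (s n) x)) \<longlonglongrightarrow> (if A x < 1 then ereal (A x / (1 - A x)) else \<infinity>)" for x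
  proof (cases "A x < 1")
    case True
    have "h n x = a n x / (1 - a n x)" for n
      using nonneg[of n x] by (simp add: a_def divide_simps)
    then have "(\<lambda>n. h (s n) x) \<longlonglongrightarrow> A x / (1 - A x)"
      using True by (simp only:) (intro tendsto_intros A, simp)
    with True show ?thesis by simp
  next
    case False
    then have "A x = 1" using \<open>A x \<le> 1\<close> by simp
    have "\<forall>\<^sub>F n in sequentially. ereal r < ereal (h (s n) x)" if "0 < r" for r
    proof -
      have "r / (1 + r) < A x"
        using \<open>A x = 1\<close> \<open>0 < r\<close> by simp
      with A[of x] have "\<forall>\<^sub>F n in sequentially. r / (1 + r) < a (s n) x"
        by (rule order_tendstoD(1))
      then show ?thesis
        by eventually_elim (use \<open>0 < r\<close> nonneg frac_one_plus_less_iff in \<open>simp add: a_def\<close>)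
    qed
    with False show ?thesis
      by (simp add: tendsto_PInfty'[where c = 0])
  qed
  with s show ?thesis
    by (intro exI[of _ s] exI[of _ "\<lambda>x. if A x < 1 then ereal (A x / (1 - A x)) else \<infinity>"]) auto
qed

lemma log_concave_limit_PInf_between:
  fixes h :: "nat \<Rightarrow> real \<Rightarrow> real"
  assumes h: "\<And>n. log_concave (h n)" and K: "\<And>x. (\<lambda>n. ereal (h n x)) \<longlonglongrightarrow> K x"
    and "K x = \<infinity>" "0 < K y" and w: "min x y < w" "w < max x y"
  shows "K w = \<infinity>"
proof -
  define t where "t = (x - w) / (x - y)"
  have "x < w \<and> w < y \<or> y < w \<and> w < x"
    using w by (auto simp: min_def max_def split: if_splits)
  then have t: "0 < t" "t < 1"
    by (auto simp: t_def divide_simps)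
  have "t * (x - y) = x - w"
    using w by (auto simp: t_def)
  then have w_eq: "w = t * y + (1 - t) * x"
    by (simp add: algebra_simps)
  obtain c where "0 < ereal c" "ereal c < K y"
    using ereal_dense2[OF \<open>0 < K y\<close>] by blast
  then have "0 < c"
    by simp
  have ev_y: "\<forall>\<^sub>F n in sequentially. c < h n y"
    using order_tendstoD(1)[OF K \<open>ereal c < K y\<close>] by simp
  have "\<forall>\<^sub>F n in sequentially. ereal r < ereal (h n w)" if "0 < r" for r
  proof -
    define B where "B = (r / c powr t) powr (1 / (1 - t))"
    have "0 < B"
      using \<open>0 < c\<close> \<open>0 < r\<close> by (simp add: B_def)
    have c_B: "c powr t * B powr (1 - t) = r"
      using \<open>0 < c\<close> \<open>0 < r\<close> t by (simp add: B_def powr_powr)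
    have "\<forall>\<^sub>F n in sequentially. ereal B < ereal (h n x)"
      using K[of x] \<open>K x = \<infinity>\<close> by (simp add: tendsto_PInfty)
    with ev_y show ?thesis
    proof eventually_elim
      case (elim n)
      have "r < c powr t * h n x powr (1 - t)"
        unfolding c_B [symmetric] using elim \<open>0 < B\<close> \<open>0 < c\<close> t
        by (intro mult_strict_left_mono powr_less_mono2) auto
      also have "\<dots> \<le> h n y powr t * h n x powr (1 - t)"
        using elim \<open>0 < c\<close> t by (intro mult_right_mono powr_mono2) auto
      also have "\<dots> \<le> h n w"
        using log_concaveD[OF h t] w_eq by simp
      finally show ?case by simp
    qed
  qed
  then have "(\<lambda>n. ereal (h n w)) \<longlonglongrightarrow> \<infinity>"
    by (simp add: tendsto_PInfty'[where c = 0])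
  with K[of w] show ?thesis
    using LIMSEQ_unique by blast
qed

lemma log_concave_limit_PInf_imp_AE_zero:
  fixes h :: "nat \<Rightarrow> real \<Rightarrow> real"
  assumes h: "\<And>n. log_concave (h n)" and K: "\<And>x. (\<lambda>n. ereal (h n x)) \<longlonglongrightarrow> K x"
    and fin: "AE x in lborel. K x < \<infinity>" and "K x0 = \<infinity>"
  shows "AE x in lborel. K x = 0"
proof -
  have K_nonneg: "0 \<le> K x" for x
    using K[of x] log_concave_nonneg[OF h] by (intro LIMSEQ_le_const[OF K]) auto
  have zero: "K y = 0" if "y \<noteq> x0" for y
  proof (rule ccontr)
    assume "K y \<noteq> 0"
    with K_nonneg have "0 < K y"
      by (simp add: order_less_le)
    then have between: "K w = \<infinity>" if "w \<in> {min x0 y<..<max x0 y}" for w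
      using that log_concave_limit_PInf_between[OF h K \<open>K x0 = \<infinity>\<close>] by auto
    from fin have "AE w in lborel. w \<notin> {min x0 y<..<max x0 y}"
      by eventually_elim (use between in auto)
    moreover have "min x0 y < max x0 y"
      using \<open>y \<noteq> x0\<close> by (simp add: min_def max_def)
    ultimately show False
      using not_AE_notin_Ioo by blast
  qed
  from AE_lborel_singleton[of x0] show ?thesis
    by eventually_elim (use zero in auto)
qed

section \<open>Existence of a maximizer\<close>

lemma opt_value_maximizing_sequence:
  assumes f: "prob_density f"
  obtains h where "\<And>n. feasible f (h n)" "(\<lambda>n. \<integral>x. h n x \<partial>lborel) \<longlonglongrightarrow> opt_value f"
proof -
  have "\<exists>h. feasible f h \<and> opt_value f - 1 / Suc n < (\<integral>x. h x \<partial>lborel)" for n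
  proof -
    have "opt_value f - 1 / Suc n < Sup {(\<integral>x. h x \<partial>lborel) | h. feasible f h}"
      by (simp add: opt_value_def)
    then show ?thesis
      using feasible_zero[OF f] bdd_above_feasible_integrals[OF f]
      by (subst (asm) less_cSup_iff) auto
  qed
  then obtain h where feas: "\<And>n. feasible f (h n)"
    and big: "\<And>n. opt_value f - 1 / Suc n < (\<integral>x. h n x \<partial>lborel)"
    by metis
  have "(\<lambda>n. \<integral>x. h n x \<partial>lborel) \<longlonglongrightarrow> opt_value f"
  proof (rule tendsto_sandwich[of "\<lambda>n. opt_value f - 1 / Suc n" _ _ "\<lambda>n. opt_value f"])
    show "(\<lambda>n. opt_value f - 1 / Suc n) \<longlonglongrightarrow> opt_value f"
      using tendsto_diff[OF tendsto_const LIMSEQ_inverse_real_of_nat] by (simp add: inverse_eq_divide)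
    show "\<forall>\<^sub>F n in sequentially. opt_value f - 1 / Suc n \<le> (\<integral>x. h n x \<partial>lborel)"
      using big by (intro always_eventually allI less_imp_le)
    show "\<forall>\<^sub>F n in sequentially. (\<integral>x. h n x \<partial>lborel) \<le> opt_value f"
      using feasible_integral_le_opt_value[OF f feas] by (intro always_eventually allI)
  qed simp
  with feas show ?thesis
    using that by blast
qed

lemma dominated_convergence_ereal_limit:
  fixes k :: "nat \<Rightarrow> real \<Rightarrow> real" and K :: "real \<Rightarrow> ereal"
  assumes meas: "\<And>n. k n \<in> borel_measurable lborel" and nonneg: "\<And>n x. 0 \<le> k n x"
    and K: "\<And>x. (\<lambda>n. ereal (k n x)) \<longlonglongrightarrow> K x"
    and f: "integrable lborel f" and le: "AE x in lborel. \<forall>n. k n x \<le> f x"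
  shows "AE x in lborel. K x \<le> ereal (f x)"
    and "(\<lambda>n. \<integral>x. k n x \<partial>lborel) \<longlonglongrightarrow> (\<integral>x. real_of_ereal (K x) \<partial>lborel)"
proof -
  show K_le: "AE x in lborel. K x \<le> ereal (f x)"
    using le
  proof eventually_elim
    case (elim x)
    show ?case
      by (rule LIMSEQ_le_const2[OF K]) (use elim in auto)
  qed
  have "K \<in> borel_measurable lborel"
    using meas by (intro borel_measurable_LIMSEQ_order[OF K]) simp
  then have H_meas: "(\<lambda>x. real_of_ereal (K x)) \<in> borel_measurable lborel"
    by measurable
  have "AE x in lborel. (\<lambda>n. k n x) \<longlonglongrightarrow> real_of_ereal (K x)"
    using K_le
  proof eventually_elim
    case (elim x)
    have "0 \<le> K x"
      using nonneg by (intro LIMSEQ_le_const[OF K]) auto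
    with elim K[of x] show ?case
      by (cases "K x") auto
  qed
  moreover have "AE x in lborel. norm (k n x) \<le> f x" for n
    using le by eventually_elim (simp add: nonneg)
  ultimately show "(\<lambda>n. \<integral>x. k n x \<partial>lborel) \<longlonglongrightarrow> (\<integral>x. real_of_ereal (K x) \<partial>lborel)"
    by (intro integral_dominated_convergence[OF H_meas meas f])
qed

lemma opt_value_attained:
  assumes f: "prob_density f"
  shows "\<exists>h. is_maximizer f h \<and> (\<integral>x. h x \<partial>lborel) = opt_value f"
proof (cases "opt_value f = 0")
  case True
  then show ?thesis
    using feasible_zero[OF f] feasible_integral_le_opt_value[OF f]
    by (intro exI[of _ "\<lambda>x. 0"]) (auto simp: is_maximizer_def)
next
  case False
  obtain h where feas: "\<And>n. feasible f (h n)"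
    and lim_int: "(\<lambda>n. \<integral>x. h n x \<partial>lborel) \<longlonglongrightarrow> opt_value f"
    using opt_value_maximizing_sequence[OF f] by blast
  have lc: "log_concave (h n)" for n
    using feas by (simp add: feasible_def)
  obtain s K where s: "strict_mono s" and K: "\<And>x. (\<lambda>n. ereal (h (s n) x)) \<longlonglongrightarrow> K x"
    using log_concave_ereal_convergent_subseq[of h] lc by blast
  define H where "H x = real_of_ereal (K x)" for x
  have "AE x in lborel. \<forall>n. h (s n) x \<le> f x"
    using feas by (simp add: AE_all_countable feasible_def)
  note limit = dominated_convergence_ereal_limit[OF log_concave_borel_measurable[OF lc]
      log_concave_nonneg[OF lc] K _ this, folded H_def]
  have H_int: "(\<integral>x. H x \<partial>lborel) = opt_value f"
    using limit(2) f LIMSEQ_subseq_LIMSEQ[OF lim_int s] LIMSEQ_unique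
    by (auto simp: prob_density_def comp_def)
  have K_le: "AE x in lborel. K x \<le> ereal (f x)"
    using limit(1) f by (simp add: prob_density_def)
  have K_finite: "K x < \<infinity>" for x
  proof (rule ccontr)
    have "AE y in lborel. K y < \<infinity>"
      using K_le by eventually_elim (auto simp: le_less_trans)
    moreover assume "\<not> K x < \<infinity>"
    ultimately have "AE y in lborel. K y = 0"
      using log_concave_limit_PInf_imp_AE_zero[OF lc K] by simp
    then have "AE y in lborel. H y = 0"
      by eventually_elim (simp add: H_def)
    then have "(\<integral>y. H y \<partial>lborel) = 0"
      by (rule integral_eq_zero_AE)
    with H_int False show False by simp
  qed
  have K_nonneg: "0 \<le> K x" for x
    using log_concave_nonneg[OF lc] by (intro LIMSEQ_le_const[OF K]) auto
  have lim_H: "(\<lambda>n. h (s n) x) \<longlonglongrightarrow> H x" for x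
    using K[of x] K_finite[of x] K_nonneg[of x] by (cases "K x") (auto simp: H_def)
  have "feasible f H"
    unfolding feasible_def
  proof
    show "log_concave H"
      using lc lim_H by (rule log_concave_limit)
    show "AE x in lborel. H x \<le> f x"
      using K_le
    proof eventually_elim
      case (elim x)
      then show ?case
        using K_finite[of x] K_nonneg[of x] by (cases "K x") (auto simp: H_def)
    qed
  qed
  then show ?thesis
    using H_int feasible_integral_le_opt_value[OF f] by (auto simp: is_maximizer_def)
qed

theorem mainTheorem7:
  shows "(\<forall>f. prob_density f \<longrightarrow>
            pi0 f = opt_value f \<and>
            (\<exists>h. is_maximizer f h \<and> (\<integral>x. h x \<partial>lborel) = opt_value f))
       \<and> (\<exists>f. prob_density f \<and>
            (\<exists>h1 h2. is_maximizer f h1 \<and> is_maximizer f h2 \<and>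
                     \<not> (AE x in lborel. h1 x = h2 x)))"
  using pi0_eq_opt_value opt_value_attained prob_density_two_blocks two_blocks_maximizers_not_unique
  by blast

end
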